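(* Let $\mathcal A_+,\mathcal A_-\subseteq\mathbb R^n$ be disjoint finite sets such that $(\mathcal A_+,\mathcal A_-)$ is nonseparable of dimension $d$, let $D\in\mathcal F_d(\mathcal A_+)$ with $\mathcal A_-\subseteq D$, write $\Lambda(\mathcal A_+,D)=\{\Delta_1,\dots,\Delta_r\}$ and fix $j\in[r]$. Then for each $a\in\mathcal A_+\setminus\operatorname{vertices}(\Delta_j)$ there is a unique facet $\Gamma_a$ of $\Delta_j$ such that $\operatorname{conv}(\Gamma_a\cup\{a\})\in\Lambda(\mathcal A_+,D)$. Consequently the map $\varphi_j:\mathcal A_+\setminus\operatorname{vertices}(\Delta_j)\to[r]\setminus\{j\}$, $a\mapsto\varphi_j(a)$ where $\Delta_{\varphi_j(a)}=\operatorname{conv}(\Gamma_a\cup\{a\})$, is well defined and injective.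
   Context: For disjoint finite sets $\mathcal A_+,\mathcal A_-\subseteq\mathbb R^n$, the dimension of $(\mathcal A_+,\mathcal A_-)$ is $\dim\operatorname{conv}(\mathcal A_+\cup\mathcal A_-)$; let $d$ be this dimension. $\mathcal F(\mathcal A_+)$ is the common refinement of all regular polyhedral subdivisions of the point configuration $\mathcal A_+$, and $\mathcal F_d(\mathcal A_+)$ its $d$-dimensional cells. $(\mathcal A_+,\mathcal A_-)$ is nonseparable if $\mathcal A_-\subseteq\operatorname{relint}(\operatorname{conv}(\mathcal A_+))$ and there is $D\in\mathcal F_d(\mathcal A_+)$ with $\mathcal A_-\subseteq D$. $\Lambda(\mathcal A_+,D)$ is the set of $d$-dimensional simplices $\Delta$ with vertices in $\mathcal A_+$ such that $\operatorname{relint}(D)\subseteq\operatorname{relint}(\Delta)$. $[r]=\{1,\dots,r\}$. *)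

theory Defs
  imports "HOL-Analysis.Analysis"
begin

text \<open>Cells of the regular polyhedral subdivision of the point configuration A
  induced by the height function h: projections conv S of the lower faces of the
  lifted configuration, i.e. S is the (nonempty) set of points of A on which some
  affine function lying weakly below h attains equality.\<close>
definition reg_cells :: "'a::euclidean_space set \<Rightarrow> ('a \<Rightarrow> real) \<Rightarrow> 'a set set" where
  "reg_cells A h = {convex hull S | S. S \<subseteq> A \<and> S \<noteq> {} \<and>
      (\<exists>w c. (\<forall>a\<in>A. w \<bullet> a + c \<le> h a) \<and> S = {a\<in>A. w \<bullet> a + c = h a})}"

definition common_refinement :: "'a::euclidean_space set \<Rightarrow> 'a set set" where
  "common_refinement A = {X. \<exists>c. (\<forall>h. c h \<in> reg_cells A h) \<and> X = (\<Inter>h. c h) \<and> X \<noteq> {}}"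

definition common_refinement_dim :: "int \<Rightarrow> 'a::euclidean_space set \<Rightarrow> 'a set set" where
  "common_refinement_dim d A = {X \<in> common_refinement A. aff_dim X = d}"

definition pair_dim :: "'a::euclidean_space set \<Rightarrow> 'a set \<Rightarrow> int" where
  "pair_dim Ap Am = aff_dim (convex hull (Ap \<union> Am))"

definition nonseparable :: "'a::euclidean_space set \<Rightarrow> 'a set \<Rightarrow> bool" where
  "nonseparable Ap Am \<longleftrightarrow> Am \<subseteq> rel_interior (convex hull Ap) \<and>
     (\<exists>D \<in> common_refinement_dim (pair_dim Ap Am) Ap. Am \<subseteq> D)"

definition vertices :: "'a::euclidean_space set \<Rightarrow> 'a set" where
  "vertices P = {x. x extreme_point_of P}"

definition Lambda :: "int \<Rightarrow> 'a::euclidean_space set \<Rightarrow> 'a set \<Rightarrow> 'a set set" where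
  "Lambda d Ap D = {\<Delta>. d simplex \<Delta> \<and> vertices \<Delta> \<subseteq> Ap \<and> rel_interior D \<subseteq> rel_interior \<Delta>}"

end

theory Submission
  imports Defs
begin

text \<open>Write \<open>\<Delta> j = convex hull V\<close> with \<open>V\<close> affinely independent of size \<open>d + 1\<close>; as the pair
  has dimension \<open>d\<close>, all of \<open>Ap\<close> lies in the affine hull of \<open>V\<close>. Fix \<open>p\<close> in the relative
  interior of \<open>D\<close>, hence of \<open>\<Delta> j\<close>.

  Existence: for \<open>a \<in> Ap - V\<close> take the height that is \<open>0\<close> on \<open>V\<close>, \<open>-1\<close> at \<open>a\<close> and \<open>M\<close>
  elsewhere. An affine function lying below this height and agreeing with it on a cell through
  \<open>p\<close> is \<open>\<le> 0\<close> on \<open>V\<close> and \<open>\<ge> -1\<close> at \<open>p\<close>, so it is bounded on \<open>Ap\<close> by a constant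
  not depending on the function. For \<open>M\<close> above that bound the cell containing \<open>D\<close> is spanned by \<open>a\<close> and all but
  one vertex \<open>v\<close> of \<open>V\<close>, and is then a simplex of \<open>\<Lambda>\<close>.

  Uniqueness: let \<open>\<pi>\<close> and \<open>l\<close> be the barycentric coordinates of \<open>p\<close> and \<open>a\<close> with respect to
  \<open>V\<close>. If \<open>p\<close> lies in the relative interior of the simplex spanned by \<open>a\<close> and \<open>V - {v}\<close>,
  then \<open>\<pi> v = t * l v\<close> and \<open>\<pi> u > t * l u\<close> for \<open>u \<noteq> v\<close>, with \<open>t > 0\<close> the coefficient of
  \<open>a\<close>; so \<open>v\<close> is the unique minimiser of \<open>\<pi> u / l u\<close> over \<open>l u > 0\<close>.

  Injectivity: \<open>a\<close> is a vertex of \<open>\<Delta> (\<phi> a)\<close>, whose other vertices all lie in \<open>V\<close>.\<close>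

lemma inner_affine_combination:
  fixes w :: "'a::real_inner"
  assumes "sum k X = 1"
  shows "w \<bullet> (\<Sum>x\<in>X. k x *\<^sub>R x) + c = (\<Sum>x\<in>X. k x * (w \<bullet> x + c))"
proof -
  have "(\<Sum>x\<in>X. k x * (w \<bullet> x + c)) = (\<Sum>x\<in>X. k x * (w \<bullet> x)) + (\<Sum>x\<in>X. k x) * c"
    by (simp add: distrib_left sum.distrib sum_distrib_right)
  with assms show ?thesis
    by (simp add: inner_sum_right)
qed

lemma affine_independent_coefficients_unique:
  fixes V :: "'a::euclidean_space set"
  assumes "\<not> affine_dependent V" and "finite V"
    and "sum f V = 1" "sum g V = 1" "(\<Sum>u\<in>V. f u *\<^sub>R u) = (\<Sum>u\<in>V. g u *\<^sub>R u)"
    and "u \<in> V"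
  shows "f u = g u"
proof (rule ccontr)
  assume "f u \<noteq> g u"
  with assms have "affine_dependent V"
    unfolding affine_dependent_explicit_finite[OF \<open>finite V\<close>]
    by (intro exI[of _ "\<lambda>x. f x - g x"]) (auto simp: sum_subtractf scaleR_diff_left)
  with assms(1) show False
    by simp
qed

lemma affine_combination_substitute:
  fixes V :: "'a::real_vector set"
  assumes "finite V" and "v \<in> V" and "a \<notin> V"
    and "sum l V = 1" and "(\<Sum>u\<in>V. l u *\<^sub>R u) = a"
    and "sum \<alpha> (insert a (V - {v})) = 1" and "(\<Sum>x\<in>insert a (V - {v}). \<alpha> x *\<^sub>R x) = p"
  defines "f \<equiv> \<lambda>u. (if u = v then 0 else \<alpha> u) + \<alpha> a * l u"
  shows "sum f V = 1" and "(\<Sum>u\<in>V. f u *\<^sub>R u) = p"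
proof -
  have ins: "sum \<beta> (insert a (V - {v})) = \<beta> a + sum \<beta> (V - {v})" for \<beta> :: "'a \<Rightarrow> 'b::comm_monoid_add"
    using assms(1,3) by simp
  have rem: "sum (\<lambda>u. if u = v then 0 else \<beta> u) V = sum \<beta> (V - {v})" for \<beta> :: "'a \<Rightarrow> 'b::comm_monoid_add"
    using assms(1,2) by (simp add: sum.remove)
  have "sum f V = sum (\<lambda>u. if u = v then 0 else \<alpha> u) V + \<alpha> a * sum l V"
    by (simp add: f_def sum.distrib sum_distrib_left)
  also have "\<dots> = 1"
    using assms(4,6) ins[of \<alpha>] rem[of \<alpha>] by simp
  finally show "sum f V = 1" .
  have "f u *\<^sub>R u = (if u = v then 0 else \<alpha> u *\<^sub>R u) + \<alpha> a *\<^sub>R l u *\<^sub>R u" for u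
    by (simp add: f_def scaleR_add_left)
  then have "(\<Sum>u\<in>V. f u *\<^sub>R u)
      = (\<Sum>u\<in>V. if u = v then 0 else \<alpha> u *\<^sub>R u) + \<alpha> a *\<^sub>R (\<Sum>u\<in>V. l u *\<^sub>R u)"
    by (simp add: sum.distrib scaleR_sum_right)
  also have "\<dots> = p"
    using assms(5,7) ins[of "\<lambda>x. \<alpha> x *\<^sub>R x"] rem[of "\<lambda>x. \<alpha> x *\<^sub>R x"] by (simp add: add.commute)
  finally show "(\<Sum>u\<in>V. f u *\<^sub>R u) = p" .
qed

lemma rel_interior_exchange_coefficients:
  fixes V :: "'a::euclidean_space set"
  assumes "\<not> affine_dependent V" and "v \<in> V" and "a \<notin> V"
    and "sum l V = 1" and "(\<Sum>u\<in>V. l u *\<^sub>R u) = a"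
    and "sum \<pi> V = 1" and "(\<Sum>u\<in>V. \<pi> u *\<^sub>R u) = p"
    and "\<not> affine_dependent (insert a (V - {v}))"
    and "p \<in> rel_interior (convex hull (insert a (V - {v})))"
  obtains t where "t > 0" and "\<pi> v = t * l v" and "\<And>u. u \<in> V - {v} \<Longrightarrow> t * l u < \<pi> u"
proof -
  have "finite V"
    using assms(1) aff_independent_finite by blast
  obtain \<alpha> where pos: "\<forall>x\<in>insert a (V - {v}). 0 < \<alpha> x"
    and "sum \<alpha> (insert a (V - {v})) = 1" and "(\<Sum>x\<in>insert a (V - {v}). \<alpha> x *\<^sub>R x) = p"
    using assms(9) rel_interior_convex_hull_explicit[OF assms(8)] by blast
  note f = affine_combination_substitute[OF \<open>finite V\<close> assms(2-5) this(2,3)]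
  have coeff: "(if u = v then 0 else \<alpha> u) + \<alpha> a * l u = \<pi> u" if "u \<in> V" for u
    using affine_independent_coefficients_unique[OF assms(1) \<open>finite V\<close> f(1) assms(6) _ that] f(2) assms(7)
    by simp
  show thesis
  proof (rule that[of "\<alpha> a"])
    show "\<alpha> a > 0" and "\<pi> v = \<alpha> a * l v"
      using pos coeff[OF assms(2)] by auto
    show "\<alpha> a * l u < \<pi> u" if "u \<in> V - {v}" for u
    proof -
      have "\<alpha> u > 0"
        using pos that by blast
      moreover have "\<alpha> u + \<alpha> a * l u = \<pi> u"
        using coeff[of u] that by simp
      ultimately show ?thesis
        by linarith
    qed
  qed
qed

lemma rel_interior_exchange_unique:
  fixes V :: "'a::euclidean_space set"
  assumes "\<not> affine_dependent V" and "a \<notin> V" and "a \<in> affine hull V"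
    and "v\<^sub>1 \<in> V" and "v\<^sub>2 \<in> V"
    and "\<not> affine_dependent (insert a (V - {v\<^sub>1}))" and "\<not> affine_dependent (insert a (V - {v\<^sub>2}))"
    and "p \<in> rel_interior (convex hull V)"
    and "p \<in> rel_interior (convex hull (insert a (V - {v\<^sub>1})))"
    and "p \<in> rel_interior (convex hull (insert a (V - {v\<^sub>2})))"
  shows "v\<^sub>1 = v\<^sub>2"
proof (rule ccontr)
  assume "v\<^sub>1 \<noteq> v\<^sub>2"
  have "finite V"
    using assms(1) aff_independent_finite by blast
  obtain l where l: "sum l V = 1" "(\<Sum>u\<in>V. l u *\<^sub>R u) = a"
    using assms(3) affine_hull_finite[OF \<open>finite V\<close>] by blast
  obtain \<pi> where \<pi>: "\<forall>u\<in>V. 0 < \<pi> u" "sum \<pi> V = 1" "(\<Sum>u\<in>V. \<pi> u *\<^sub>R u) = p"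
    using assms(8) rel_interior_convex_hull_explicit[OF assms(1)] by blast
  obtain t\<^sub>1 where t\<^sub>1: "t\<^sub>1 > 0" "\<pi> v\<^sub>1 = t\<^sub>1 * l v\<^sub>1" "\<And>u. u \<in> V - {v\<^sub>1} \<Longrightarrow> t\<^sub>1 * l u < \<pi> u"
    using rel_interior_exchange_coefficients[OF assms(1,4,2) l \<pi>(2,3) assms(6,9)] by blast
  obtain t\<^sub>2 where t\<^sub>2: "t\<^sub>2 > 0" "\<pi> v\<^sub>2 = t\<^sub>2 * l v\<^sub>2" "\<And>u. u \<in> V - {v\<^sub>2} \<Longrightarrow> t\<^sub>2 * l u < \<pi> u"
    using rel_interior_exchange_coefficients[OF assms(1,5,2) l \<pi>(2,3) assms(7,10)] by blast
  have "l v\<^sub>1 > 0" "l v\<^sub>2 > 0"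
    using \<pi>(1) assms(4,5) t\<^sub>1(1,2) t\<^sub>2(1,2) by (metis zero_less_mult_pos)+
  moreover have "t\<^sub>2 * l v\<^sub>1 < t\<^sub>1 * l v\<^sub>1" "t\<^sub>1 * l v\<^sub>2 < t\<^sub>2 * l v\<^sub>2"
    using t\<^sub>1(2) t\<^sub>2(2) t\<^sub>1(3)[of v\<^sub>2] t\<^sub>2(3)[of v\<^sub>1] assms(4,5) \<open>v\<^sub>1 \<noteq> v\<^sub>2\<close> by auto
  ultimately show False
    by (simp add: mult_less_cancel_right)
qed

lemma affine_function_bound_at_vertex:
  fixes V :: "'a::real_inner set"
  assumes "finite V" and "\<forall>u\<in>V. 0 < \<pi> u" and "sum \<pi> V = 1" and "(\<Sum>u\<in>V. \<pi> u *\<^sub>R u) = p"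
    and le: "\<forall>u\<in>V. w \<bullet> u + c \<le> 0" and ge: "w \<bullet> p + c \<ge> -1" and "u \<in> V"
  shows "\<bar>w \<bullet> u + c\<bar> \<le> 1 / \<pi> u"
proof -
  have "\<pi> u * - (w \<bullet> u + c) \<le> (\<Sum>u'\<in>V. \<pi> u' * - (w \<bullet> u' + c))"
    using assms(1,2,7) le by (intro member_le_sum) (force simp: mult_le_0_iff)+
  also have "\<dots> = - (\<Sum>u'\<in>V. \<pi> u' * (w \<bullet> u' + c))"
    by (simp only: mult_minus_right sum_negf)
  also have "\<dots> = - (w \<bullet> p + c)"
    using inner_affine_combination[OF assms(3), of w c] assms(4) by simp
  finally have "\<pi> u * - (w \<bullet> u + c) \<le> 1"
    using ge by linarith
  then have "- (w \<bullet> u + c) \<le> 1 / \<pi> u"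
    using assms(2,7) by (simp add: le_divide_eq mult.commute)
  then show ?thesis
    using assms(7) le by (simp add: abs_of_nonpos)
qed

lemma affine_function_bound_from_rel_interior:
  fixes A V :: "'a::euclidean_space set"
  assumes "finite A" and "A \<subseteq> affine hull V" and "\<not> affine_dependent V"
    and "p \<in> rel_interior (convex hull V)"
  obtains M :: real where "M \<ge> 0"
    and "\<And>w c b. \<forall>u\<in>V. w \<bullet> u + c \<le> 0 \<Longrightarrow> w \<bullet> p + c \<ge> -1 \<Longrightarrow> b \<in> A \<Longrightarrow> w \<bullet> b + c < M"
proof -
  have "finite V"
    using assms(3) aff_independent_finite by blast
  obtain \<pi> where \<pi>: "\<forall>u\<in>V. 0 < \<pi> u" "sum \<pi> V = 1" "(\<Sum>u\<in>V. \<pi> u *\<^sub>R u) = p"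
    using assms(4) rel_interior_convex_hull_explicit[OF assms(3)] by blast
  have "\<forall>b\<in>A. \<exists>k. sum k V = 1 \<and> (\<Sum>u\<in>V. k u *\<^sub>R u) = b"
    using assms(2) affine_hull_finite[OF \<open>finite V\<close>] by blast
  then obtain \<kappa> where \<kappa>: "\<And>b. b \<in> A \<Longrightarrow> sum (\<kappa> b) V = 1 \<and> (\<Sum>u\<in>V. \<kappa> b u *\<^sub>R u) = b"
    by metis
  define M where "M = 1 + (\<Sum>b\<in>A. \<Sum>u\<in>V. \<bar>\<kappa> b u\<bar> / \<pi> u)"
  show thesis
  proof
    show "M \<ge> 0"
      unfolding M_def using \<pi>(1) by (auto intro!: sum_nonneg add_nonneg_nonneg)
  next
    fix w c b
    assume le: "\<forall>u\<in>V. w \<bullet> u + c \<le> 0" and ge: "w \<bullet> p + c \<ge> -1" and "b \<in> A"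
    note bound = affine_function_bound_at_vertex[OF \<open>finite V\<close> \<pi> le ge]
    have "w \<bullet> b + c = (\<Sum>u\<in>V. \<kappa> b u * (w \<bullet> u + c))"
      using inner_affine_combination[of "\<kappa> b" V] \<kappa>[OF \<open>b \<in> A\<close>] by metis
    also have "\<dots> \<le> (\<Sum>u\<in>V. \<bar>\<kappa> b u\<bar> / \<pi> u)"
    proof (rule sum_mono)
      fix u assume "u \<in> V"
      have "\<kappa> b u * (w \<bullet> u + c) \<le> \<bar>\<kappa> b u\<bar> * \<bar>w \<bullet> u + c\<bar>"
        by (metis abs_ge_self abs_mult)
      also have "\<dots> \<le> \<bar>\<kappa> b u\<bar> * (1 / \<pi> u)"
        using bound[OF \<open>u \<in> V\<close>] by (intro mult_left_mono) auto
      finally show "\<kappa> b u * (w \<bullet> u + c) \<le> \<bar>\<kappa> b u\<bar> / \<pi> u"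
        by simp
    qed
    also have "\<dots> \<le> (\<Sum>b\<in>A. \<Sum>u\<in>V. \<bar>\<kappa> b u\<bar> / \<pi> u)"
      using \<open>b \<in> A\<close> assms(1) \<pi>(1) by (intro member_le_sum) (auto intro!: sum_nonneg)
    finally show "w \<bullet> b + c < M"
      unfolding M_def by simp
  qed
qed

lemma subset_insert_exchange:
  assumes "finite V" and "S \<subseteq> insert a V" and "\<not> V \<subseteq> S" and "card V \<le> card S"
  obtains v where "v \<in> V" and "S = insert a (V - {v})"
proof -
  have "finite S"
    using assms(1,2) finite_subset by blast
  have "a \<in> S"
  proof (rule ccontr)
    assume "a \<notin> S"
    then have "S \<subseteq> V"
      using assms(2) by blast
    with assms(1,3,4) show False
      using card_seteq by blast
  qed
  obtain v where "v \<in> V" "v \<notin> S"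
    using assms(3) by blast
  have "S - {a} \<subseteq> V - {v}"
    using assms(2) \<open>v \<notin> S\<close> by blast
  moreover have "card (V - {v}) \<le> card (S - {a})"
    using assms(4) \<open>a \<in> S\<close> \<open>v \<in> V\<close> by (simp add: card_Diff_singleton)
  ultimately have "S - {a} = V - {v}"
    using card_seteq assms(1) by (metis finite_Diff)
  with \<open>a \<in> S\<close> \<open>v \<in> V\<close> show thesis
    by (intro that) blast+
qed

definition exchange_height :: "'a set \<Rightarrow> 'a \<Rightarrow> real \<Rightarrow> 'a \<Rightarrow> real" where
  "exchange_height V a M x = (if x \<in> V then 0 else if x = a then -1 else M)"

lemma exchange_height_contact_set:
  fixes Ap V :: "'a::euclidean_space set" and w a p :: 'a and c M :: real
  defines "S \<equiv> {x\<in>Ap. w \<bullet> x + c = exchange_height V a M x}"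
  assumes "V \<subseteq> Ap" and "Ap \<subseteq> affine hull V" and "a \<in> Ap" and "a \<notin> V" and "M \<ge> 0"
    and M: "\<And>b. \<forall>u\<in>V. w \<bullet> u + c \<le> 0 \<Longrightarrow> w \<bullet> p + c \<ge> -1 \<Longrightarrow> b \<in> Ap \<Longrightarrow> w \<bullet> b + c < M"
    and le: "\<forall>x\<in>Ap. w \<bullet> x + c \<le> exchange_height V a M x"
    and "p \<in> convex hull S"
  shows "S \<subseteq> insert a V" and "\<not> V \<subseteq> S"
proof -
  have leV: "\<forall>u\<in>V. w \<bullet> u + c \<le> 0"
  proof
    fix u assume "u \<in> V"
    with le assms(2) have "w \<bullet> u + c \<le> exchange_height V a M u"
      by blast
    with \<open>u \<in> V\<close> show "w \<bullet> u + c \<le> 0"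
      by (simp add: exchange_height_def)
  qed
  have "S \<subseteq> {x. w \<bullet> x \<ge> -1 - c}"
    using \<open>M \<ge> 0\<close> by (auto simp: S_def exchange_height_def split: if_splits)
  then have "convex hull S \<subseteq> {x. w \<bullet> x \<ge> -1 - c}"
    by (rule hull_minimal) (rule convex_halfspace_ge)
  with \<open>p \<in> convex hull S\<close> have "w \<bullet> p + c \<ge> -1"
    by auto
  note M = M[OF leV this]
  show "S \<subseteq> insert a V"
  proof
    fix x assume "x \<in> S"
    with M[of x] show "x \<in> insert a V"
      by (auto simp: S_def exchange_height_def split: if_splits)
  qed
  show "\<not> V \<subseteq> S"
  proof
    assume "V \<subseteq> S"
    then have "V \<subseteq> {x. w \<bullet> x = - c}"
      by (auto simp: S_def exchange_height_def)
    then have "affine hull V \<subseteq> {x. w \<bullet> x = - c}"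
      by (rule hull_minimal) (rule affine_hyperplane)
    with assms(3,4) have "w \<bullet> a + c = 0"
      by auto
    with le assms(4,5) show False
      by (force simp: exchange_height_def)
  qed
qed

lemma reg_cells_exchange_height:
  fixes Ap V :: "'a::euclidean_space set"
  assumes "finite Ap" and "V \<subseteq> Ap" and "\<not> affine_dependent V" and "Ap \<subseteq> affine hull V"
    and "a \<in> Ap" and "a \<notin> V" and "p \<in> rel_interior (convex hull V)"
  obtains M where "\<And>X. X \<in> reg_cells Ap (exchange_height V a M) \<Longrightarrow> p \<in> X \<Longrightarrow>
      int (card V) - 1 \<le> aff_dim X \<Longrightarrow> \<exists>v\<in>V. X = convex hull (insert a (V - {v}))"
proof -
  obtain M where "M \<ge> 0" and M:
    "\<And>w c b. \<forall>u\<in>V. w \<bullet> u + c \<le> 0 \<Longrightarrow> w \<bullet> p + c \<ge> -1 \<Longrightarrow> b \<in> Ap \<Longrightarrow> w \<bullet> b + c < M"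
    using affine_function_bound_from_rel_interior[OF assms(1,4,3,7)] by blast
  show thesis
  proof (rule that)
    fix X assume "X \<in> reg_cells Ap (exchange_height V a M)" and "p \<in> X"
      and dimX: "int (card V) - 1 \<le> aff_dim X"
    then obtain S w c where X: "X = convex hull S" and "S \<subseteq> Ap"
      and le: "\<forall>x\<in>Ap. w \<bullet> x + c \<le> exchange_height V a M x"
      and S: "S = {x\<in>Ap. w \<bullet> x + c = exchange_height V a M x}"
      unfolding reg_cells_def by blast
    note contact = exchange_height_contact_set[OF assms(2,4,5,6) \<open>M \<ge> 0\<close> M le, folded S]
    have "finite S"
      using \<open>S \<subseteq> Ap\<close> assms(1) finite_subset by blast
    then have "card V \<le> card S"
      using dimX aff_dim_le_card[OF \<open>finite S\<close>] by (simp add: X aff_dim_convex_hull)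
    with contact obtain v where "v \<in> V" "S = insert a (V - {v})"
      using \<open>p \<in> X\<close> subset_insert_exchange[OF aff_independent_finite[OF assms(3)]] unfolding X
      by blast
    with X show "\<exists>v\<in>V. X = convex hull (insert a (V - {v}))"
      by blast
  qed
qed

lemma common_refinement_subset_exchange:
  fixes Ap V D :: "'a::euclidean_space set"
  assumes "finite Ap" and "V \<subseteq> Ap" and "\<not> affine_dependent V" and "Ap \<subseteq> affine hull V"
    and "a \<in> Ap" and "a \<notin> V" and "D \<in> common_refinement Ap" and "aff_dim D = int (card V) - 1"
    and "p \<in> D" and "p \<in> rel_interior (convex hull V)"
  obtains v where "v \<in> V" and "D \<subseteq> convex hull (insert a (V - {v}))"
proof -
  obtain M where M: "\<And>X. X \<in> reg_cells Ap (exchange_height V a M) \<Longrightarrow> p \<in> X \<Longrightarrow>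
      int (card V) - 1 \<le> aff_dim X \<Longrightarrow> \<exists>v\<in>V. X = convex hull (insert a (V - {v}))"
    using reg_cells_exchange_height[OF assms(1-6,10)] by blast
  from assms(7) obtain c where "\<forall>h. c h \<in> reg_cells Ap h" and "D = (\<Inter>h. c h)"
    unfolding common_refinement_def by blast
  then have "c (exchange_height V a M) \<in> reg_cells Ap (exchange_height V a M)"
    and D: "D \<subseteq> c (exchange_height V a M)"
    by blast+
  moreover have "int (card V) - 1 \<le> aff_dim (c (exchange_height V a M))"
    using aff_dim_subset[OF D] assms(8) by simp
  ultimately obtain v where "v \<in> V" "c (exchange_height V a M) = convex hull (insert a (V - {v}))"
    using M assms(9) by blast
  with D show thesis
    using that by blast
qed

lemma convex_common_refinement:
  assumes "X \<in> common_refinement A"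
  shows "convex X"
proof -
  from assms obtain c where c: "\<forall>h. c h \<in> reg_cells A h" and "X = (\<Inter>h. c h)"
    unfolding common_refinement_def by blast
  have "convex (c h)" for h
    using c[rule_format, of h] unfolding reg_cells_def by (auto intro: convex_convex_hull)
  with \<open>X = (\<Inter>h. c h)\<close> show ?thesis
    by (auto intro!: convex_INT)
qed

lemma vertices_convex_hull_affine_independent:
  "\<not> affine_dependent V \<Longrightarrow> vertices (convex hull V) = V"
  using extreme_point_of_convex_hull_affine_independent unfolding vertices_def by blast

lemma Lambda_memberE:
  assumes "S \<in> Lambda d Ap D"
  obtains V where "S = convex hull V" and "\<not> affine_dependent V" and "int (card V) = d + 1"
    and "V \<subseteq> Ap" and "rel_interior D \<subseteq> rel_interior (convex hull V)"
proof -
  from assms obtain V where "S = convex hull V" "\<not> affine_dependent V" "int (card V) = d + 1"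
    unfolding Lambda_def simplex_def by blast
  moreover from this assms have "V \<subseteq> Ap" and "rel_interior D \<subseteq> rel_interior (convex hull V)"
    unfolding Lambda_def by (auto simp: vertices_convex_hull_affine_independent)
  ultimately show thesis
    by (rule that)
qed

lemma subset_affine_hull_pair_simplex:
  fixes V Ap Am :: "'a::euclidean_space set"
  assumes "V \<subseteq> Ap" and "\<not> affine_dependent V" and "int (card V) = pair_dim Ap Am + 1"
  shows "Ap \<subseteq> affine hull V"
proof -
  have "aff_dim V = aff_dim (Ap \<union> Am)"
    using aff_dim_affine_independent[OF assms(2)] assms(3)
    unfolding pair_dim_def aff_dim_convex_hull by linarith
  with assms(1) have "affine hull V = affine hull (Ap \<union> Am)"
    using aff_dim_eq_full_gen[of V "Ap \<union> Am"] by blast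
  then show ?thesis
    using hull_subset[of "Ap \<union> Am" affine] by blast
qed

lemma convex_hull_in_Lambda:
  fixes W :: "'a::euclidean_space set"
  assumes "finite W" and "W \<subseteq> Ap" and "D \<noteq> {}" and "D \<subseteq> convex hull W"
    and "aff_dim D = int (card W) - 1"
  shows "\<not> affine_dependent W" and "convex hull W \<in> Lambda (aff_dim D) Ap D"
proof -
  have "aff_dim D \<le> aff_dim W"
    using assms(4) aff_dim_subset aff_dim_convex_hull by metis
  then have dimW: "aff_dim W = aff_dim D"
    using aff_dim_le_card[OF assms(1)] assms(5) by linarith
  then show indW: "\<not> affine_dependent W"
    using affine_independent_iff_card[of W] assms(1,5) by simp
  have "affine hull D = affine hull (convex hull W)"
    using dimW assms(4) aff_dim_eq_full_gen by (metis aff_dim_convex_hull)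
  then have "rel_interior D \<subseteq> rel_interior (convex hull W)"
    by (rule rel_interior_mono[OF assms(4)])
  with indW assms(2,5) show "convex hull W \<in> Lambda (aff_dim D) Ap D"
    unfolding Lambda_def by (auto simp: vertices_convex_hull_affine_independent simplex_convex_hull)
qed

lemma convex_hull_convex_hull_Un_singleton:
  "convex hull (convex hull X \<union> {a}) = convex hull (insert a X)"
  by (metis hull_Un_left insert_is_Un Un_commute)

lemma Lambda_exchange_facet:
  fixes V :: "'a::euclidean_space set"
  assumes "\<not> affine_dependent V" and "a \<notin> V" and "\<Gamma> facet_of convex hull V"
    and "convex hull (\<Gamma> \<union> {a}) \<in> Lambda (int (card V) - 1) Ap D"
  obtains v where "v \<in> V" and "\<Gamma> = convex hull (V - {v})"
    and "convex hull (\<Gamma> \<union> {a}) = convex hull (insert a (V - {v}))"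
    and "\<not> affine_dependent (insert a (V - {v}))"
proof -
  obtain v where "v \<in> V" and \<Gamma>: "\<Gamma> = convex hull (V - {v})"
    using assms(3) facet_of_convex_hull_affine_independent[OF assms(1)] by blast
  have hull: "convex hull (\<Gamma> \<union> {a}) = convex hull (insert a (V - {v}))"
    unfolding \<Gamma> by (rule convex_hull_convex_hull_Un_singleton)
  have "finite V"
    using assms(1) aff_independent_finite by blast
  have "aff_dim (insert a (V - {v})) = int (card V) - 1"
    using assms(4) aff_dim_simplex unfolding hull Lambda_def by (fastforce simp: aff_dim_convex_hull)
  moreover have "card (insert a (V - {v})) = card V"
    using \<open>finite V\<close> \<open>v \<in> V\<close> assms(2) card_Suc_Diff1 by fastforce
  ultimately have "\<not> affine_dependent (insert a (V - {v}))"
    using affine_independent_iff_card[of "insert a (V - {v})"] \<open>finite V\<close> by simp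
  with that \<open>v \<in> V\<close> \<Gamma> hull show thesis
    by blast
qed

lemma Lambda_exchange_vertices:
  fixes V :: "'a::euclidean_space set"
  assumes "\<not> affine_dependent V" and "a \<notin> V" and "\<Gamma> facet_of convex hull V"
    and "convex hull (\<Gamma> \<union> {a}) \<in> Lambda (int (card V) - 1) Ap D"
  shows "a \<in> vertices (convex hull (\<Gamma> \<union> {a}))"
    and "vertices (convex hull (\<Gamma> \<union> {a})) \<subseteq> insert a V"
proof -
  obtain v where "convex hull (\<Gamma> \<union> {a}) = convex hull (insert a (V - {v}))"
    and "\<not> affine_dependent (insert a (V - {v}))"
    by (rule Lambda_exchange_facet[OF assms])
  then show "a \<in> vertices (convex hull (\<Gamma> \<union> {a}))"
    and "vertices (convex hull (\<Gamma> \<union> {a})) \<subseteq> insert a V"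
    by (auto simp: vertices_convex_hull_affine_independent)
qed

lemma rel_interior_common_refinement_nonempty:
  assumes "D \<in> common_refinement A"
  obtains p where "p \<in> rel_interior D"
proof -
  have "D \<noteq> {}"
    using assms unfolding common_refinement_def by blast
  with that show thesis
    using convex_common_refinement[OF assms] rel_interior_eq_empty by blast
qed

lemma Lambda_exchange_exists:
  fixes Ap V D :: "'a::euclidean_space set"
  assumes "finite Ap" and "V \<subseteq> Ap" and "\<not> affine_dependent V" and "Ap \<subseteq> affine hull V"
    and "D \<in> common_refinement Ap" and "aff_dim D = int (card V) - 1"
    and "rel_interior D \<subseteq> rel_interior (convex hull V)" and "a \<in> Ap - V"
  obtains v where "v \<in> V" and "\<not> affine_dependent (insert a (V - {v}))"
    and "convex hull (insert a (V - {v})) \<in> Lambda (aff_dim D) Ap D"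
proof -
  obtain p where "p \<in> rel_interior D"
    using rel_interior_common_refinement_nonempty[OF assms(5)] .
  then have "p \<in> D" and pV: "p \<in> rel_interior (convex hull V)"
    using rel_interior_subset assms(7) by blast+
  obtain v where "v \<in> V" and Dv: "D \<subseteq> convex hull (insert a (V - {v}))"
    using common_refinement_subset_exchange[OF assms(1-4) _ _ assms(5,6) \<open>p \<in> D\<close> pV] assms(8)
    by blast
  have "card (insert a (V - {v})) = card V"
    using aff_independent_finite[OF assms(3)] \<open>v \<in> V\<close> assms(8) card_Suc_Diff1 by fastforce
  with assms(6) have dimW: "aff_dim D = int (card (insert a (V - {v}))) - 1"
    by simp
  have "finite (insert a (V - {v}))" and "insert a (V - {v}) \<subseteq> Ap"
    using aff_independent_finite[OF assms(3)] assms(2,8) by auto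
  note W = convex_hull_in_Lambda[OF this _ Dv dimW]
  with \<open>v \<in> V\<close> \<open>p \<in> D\<close> show thesis
    using that by blast
qed

lemma Lambda_exchange_unique:
  fixes Ap V D :: "'a::euclidean_space set"
  assumes "finite Ap" and "V \<subseteq> Ap" and "\<not> affine_dependent V" and "Ap \<subseteq> affine hull V"
    and "D \<in> common_refinement Ap" and dimD: "aff_dim D = int (card V) - 1"
    and relD: "rel_interior D \<subseteq> rel_interior (convex hull V)" and "a \<in> Ap - V"
  shows "\<exists>!\<Gamma>. \<Gamma> facet_of convex hull V \<and> convex hull (\<Gamma> \<union> {a}) \<in> Lambda (aff_dim D) Ap D"
proof -
  obtain v where "v \<in> V" and ind: "\<not> affine_dependent (insert a (V - {v}))"
    and L: "convex hull (insert a (V - {v})) \<in> Lambda (aff_dim D) Ap D"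
    by (rule Lambda_exchange_exists[OF assms])
  have "a \<notin> V" "a \<in> affine hull V"
    using assms(4,8) by auto
  have "V - {v} \<noteq> {}"
    using \<open>a \<notin> V\<close> \<open>a \<in> affine hull V\<close> \<open>v \<in> V\<close> by (metis affine_hull_sing insert_Diff singletonD)
  then have facet: "convex hull (V - {v}) facet_of convex hull V"
    unfolding facet_of_convex_hull_affine_independent[OF assms(3)] using \<open>v \<in> V\<close> by auto
  obtain p where "p \<in> rel_interior D"
    using rel_interior_common_refinement_nonempty[OF assms(5)] .
  show ?thesis
  proof (rule ex1I[of _ "convex hull (V - {v})"])
    show "convex hull (V - {v}) facet_of convex hull V \<and>
        convex hull (convex hull (V - {v}) \<union> {a}) \<in> Lambda (aff_dim D) Ap D"
      using facet L convex_hull_convex_hull_Un_singleton[of "V - {v}" a] by simp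
  next
    fix \<Gamma> assume "\<Gamma> facet_of convex hull V \<and> convex hull (\<Gamma> \<union> {a}) \<in> Lambda (aff_dim D) Ap D"
    then have \<Gamma>: "\<Gamma> facet_of convex hull V" "convex hull (\<Gamma> \<union> {a}) \<in> Lambda (int (card V) - 1) Ap D"
      unfolding dimD by blast+
    obtain v' where "v' \<in> V" and "\<Gamma> = convex hull (V - {v'})"
      and hull': "convex hull (\<Gamma> \<union> {a}) = convex hull (insert a (V - {v'}))"
      and ind': "\<not> affine_dependent (insert a (V - {v'}))"
      by (rule Lambda_exchange_facet[OF assms(3) \<open>a \<notin> V\<close> \<Gamma>])
    have "p \<in> rel_interior (convex hull (insert a (V - {v'})))"
      using \<Gamma>(2) \<open>p \<in> rel_interior D\<close> unfolding hull' Lambda_def by blast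
    moreover have "p \<in> rel_interior (convex hull (insert a (V - {v})))"
      using L \<open>p \<in> rel_interior D\<close> unfolding Lambda_def by blast
    moreover have "p \<in> rel_interior (convex hull V)"
      using relD \<open>p \<in> rel_interior D\<close> by blast
    ultimately have "v' = v"
      using rel_interior_exchange_unique[OF assms(3) \<open>a \<notin> V\<close> \<open>a \<in> affine hull V\<close>
          \<open>v' \<in> V\<close> \<open>v \<in> V\<close> ind' ind] by blast
    with \<open>\<Gamma> = convex hull (V - {v'})\<close> show "\<Gamma> = convex hull (V - {v})"
      by simp
  qed
qed

lemma inj_on_vertex_exchange:
  assumes "A \<inter> vertices S = {}"
    and "\<And>a. a \<in> A \<Longrightarrow> a \<in> vertices (T a) \<and> vertices (T a) \<subseteq> insert a (vertices S)"
  shows "inj_on T A" and "\<And>a. a \<in> A \<Longrightarrow> T a \<noteq> S"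
proof -
  show "inj_on T A"
  proof (rule inj_onI)
    fix a b assume "a \<in> A" "b \<in> A" "T a = T b"
    with assms(2)[OF \<open>a \<in> A\<close>] assms(2)[OF \<open>b \<in> A\<close>] have "a \<in> insert b (vertices S)"
      by auto
    with \<open>a \<in> A\<close> assms(1) show "a = b"
      by blast
  qed
  show "T a \<noteq> S" if "a \<in> A" for a
    using assms(1) assms(2)[OF that] that by blast
qed

lemma exchange_index_map:
  assumes "\<Delta> ` I = L" and "A \<inter> vertices (\<Delta> j) = {}"
    and ex: "\<And>a. a \<in> A \<Longrightarrow> \<exists>\<Gamma>. \<Gamma> facet_of \<Delta> j \<and> convex hull (\<Gamma> \<union> {a}) \<in> L"
    and vert: "\<And>a \<Gamma>. a \<in> A \<Longrightarrow> \<Gamma> facet_of \<Delta> j \<Longrightarrow> convex hull (\<Gamma> \<union> {a}) \<in> L \<Longrightarrow>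
        a \<in> vertices (convex hull (\<Gamma> \<union> {a})) \<and>
        vertices (convex hull (\<Gamma> \<union> {a})) \<subseteq> insert a (vertices (\<Delta> j))"
  shows "\<exists>\<phi>. (\<forall>a\<in>A. \<phi> a \<in> I - {j} \<and>
              (\<exists>\<Gamma>. \<Gamma> facet_of \<Delta> j \<and> \<Delta> (\<phi> a) = convex hull (\<Gamma> \<union> {a})))
           \<and> inj_on \<phi> A"
proof -
  have "\<exists>i. i \<in> I \<and> (\<exists>\<Gamma>. \<Gamma> facet_of \<Delta> j \<and> \<Delta> i = convex hull (\<Gamma> \<union> {a}))" if "a \<in> A" for a
  proof -
    obtain \<Gamma> where "\<Gamma> facet_of \<Delta> j" and "convex hull (\<Gamma> \<union> {a}) \<in> \<Delta> ` I"
      using ex[OF \<open>a \<in> A\<close>] unfolding assms(1) by blast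
    moreover from this(2) obtain i where "convex hull (\<Gamma> \<union> {a}) = \<Delta> i" and "i \<in> I"
      by (rule imageE)
    ultimately show ?thesis
      by metis
  qed
  then obtain \<phi> where \<phi>: "\<And>a. a \<in> A \<Longrightarrow> \<phi> a \<in> I \<and>
      (\<exists>\<Gamma>. \<Gamma> facet_of \<Delta> j \<and> \<Delta> (\<phi> a) = convex hull (\<Gamma> \<union> {a}))"
    by metis
  have "a \<in> vertices (\<Delta> (\<phi> a)) \<and> vertices (\<Delta> (\<phi> a)) \<subseteq> insert a (vertices (\<Delta> j))"
    if "a \<in> A" for a
  proof -
    obtain \<Gamma> where \<Gamma>: "\<Gamma> facet_of \<Delta> j" and eq: "\<Delta> (\<phi> a) = convex hull (\<Gamma> \<union> {a})"
      using \<phi>[OF \<open>a \<in> A\<close>] by blast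
    have "\<Delta> (\<phi> a) \<in> L"
      using imageI[of "\<phi> a" I \<Delta>] \<phi>[OF \<open>a \<in> A\<close>] unfolding assms(1) by blast
    then show ?thesis
      using vert[OF \<open>a \<in> A\<close> \<Gamma>] unfolding eq by blast
  qed
  note inj = inj_on_vertex_exchange[OF assms(2), of "\<lambda>a. \<Delta> (\<phi> a)", OF this]
  have "inj_on \<phi> A"
    using inj(1) by (rule inj_on_imageI2[unfolded comp_def])
  with \<phi> inj(2) show ?thesis
    by blast
qed

theorem lemma3p4:
  fixes Ap Am :: "(real ^ 'n) set" and D :: "(real ^ 'n) set"
    and \<Delta> :: "nat \<Rightarrow> (real ^ 'n) set" and r j :: nat
  assumes "finite Ap" and "finite Am" and "Ap \<inter> Am = {}"
    and "nonseparable Ap Am"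
    and "D \<in> common_refinement_dim (pair_dim Ap Am) Ap" and "Am \<subseteq> D"
    and "bij_betw \<Delta> {1..r} (Lambda (pair_dim Ap Am) Ap D)"
    and "j \<in> {1..r}"
  shows "(\<forall>a \<in> Ap - vertices (\<Delta> j).
            \<exists>!\<Gamma>. \<Gamma> facet_of \<Delta> j \<and>
                 convex hull (\<Gamma> \<union> {a}) \<in> Lambda (pair_dim Ap Am) Ap D)
       \<and> (\<exists>\<phi>. (\<forall>a \<in> Ap - vertices (\<Delta> j).
                 \<phi> a \<in> {1..r} - {j} \<and>
                 (\<exists>\<Gamma>. \<Gamma> facet_of \<Delta> j \<and> \<Delta> (\<phi> a) = convex hull (\<Gamma> \<union> {a})))
             \<and> inj_on \<phi> (Ap - vertices (\<Delta> j)))"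
proof -
  let ?L = "Lambda (pair_dim Ap Am) Ap D"
  have D: "D \<in> common_refinement Ap" "aff_dim D = pair_dim Ap Am"
    using assms(5) unfolding common_refinement_dim_def by auto
  have img: "\<Delta> ` {1..r} = ?L"
    using assms(7) by (simp add: bij_betw_def)
  then have "\<Delta> j \<in> ?L"
    using assms(8) by blast
  then obtain V where V: "\<Delta> j = convex hull V" "\<not> affine_dependent V"
    "int (card V) = pair_dim Ap Am + 1" "V \<subseteq> Ap" "rel_interior D \<subseteq> rel_interior (convex hull V)"
    by (rule Lambda_memberE)
  have dim: "pair_dim Ap Am = int (card V) - 1" and vertV: "vertices (convex hull V) = V"
    using V(2,3) vertices_convex_hull_affine_independent by auto
  have AH: "Ap \<subseteq> affine hull V"
    using subset_affine_hull_pair_simplex[OF V(4,2,3)] .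
  have unique: "\<exists>!\<Gamma>. \<Gamma> facet_of \<Delta> j \<and> convex hull (\<Gamma> \<union> {a}) \<in> ?L"
    if "a \<in> Ap - vertices (\<Delta> j)" for a
    using Lambda_exchange_unique[OF assms(1) V(4,2) AH D(1) _ V(5)] that D(2)
    unfolding V(1) vertV dim by simp
  have vertices: "a \<in> vertices (convex hull (\<Gamma> \<union> {a})) \<and>
      vertices (convex hull (\<Gamma> \<union> {a})) \<subseteq> insert a (vertices (\<Delta> j))"
    if "a \<in> Ap - vertices (\<Delta> j)" "\<Gamma> facet_of \<Delta> j" "convex hull (\<Gamma> \<union> {a}) \<in> ?L" for a \<Gamma>
    using Lambda_exchange_vertices[OF V(2), of a \<Gamma> Ap D] that unfolding V(1) vertV dim by blast
  have "(Ap - vertices (\<Delta> j)) \<inter> vertices (\<Delta> j) = {}"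
    by blast
  from exchange_index_map[OF img this ex1_implies_ex[OF unique] vertices] unique
  show ?thesis
    by blast
qed

end
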